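(* Let $\mathcal C$ be a parsummable category, let $m,n\ge0$, $X_\bullet=(X_1,\dots,X_m)\in\mathcal C^{\times m}$, $Y_\bullet=(Y_1,\dots,Y_n)\in\mathcal C^{\times n}$, and let $\phi\colon\mathbf m\times\omega\to\omega$ and $\psi\colon\mathbf n\times\omega\to\omega$ be arbitrary injections. Then the map $\mathrm{Hom}_{\mathcal C}(\phi_*(X_\bullet),\psi_*(Y_\bullet))\to\Sigma_{\mathcal C}(X_\bullet,Y_\bullet)$, $f\mapsto[\psi,f,\phi]$, is bijective.
   Context: Let $\omega=\{1,2,\dots\}$, $\mathbf m=\{1,\dots,m\}$, and $\mathcal M$ the monoid of injections $\omega\to\omega$; $E\mathcal M$ is the category with objects $\mathcal M$ and a unique morphism between any two objects (a strict monoidal category). An $E\mathcal M$-category is a small category with a strict $E\mathcal M$-action; $u_*$ denotes the action of $u\in\mathcal M$ and $[v,u]\colon u_*\Rightarrow v_*$ the natural isomorphism from the morphism $u\to v$. An object $X$ is supported on finite $A\subset\omega$ if $u_*X=X$ whenever $u$ fixes $A$ pointwise; $\mathrm{supp}(X)$ is the intersection of the finite sets supporting $X$; tame means all objects are finitely supported. A parsummable category is a tame $E\mathcal M$-category $\mathcal C$ with an object $0$ of empty support and a functor $+$ defined on the full subcategory of $\mathcal C\times\mathcal C$ of disjointly supported pairs, strictly unital, associative, commutative and $E\mathcal M$-equivariant ($u_*(X+Y)=u_*X+u_*Y$ and $[u,1]_{X+Y}=[u,1]_X+[u,1]_Y$). For an injection $\phi\colon\mathbf m\times\omega\to\omega$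 put $\phi_*(X_\bullet)=\sum_{i=1}^m\phi(i,-)_*(X_i)$, and for another injection $\phi'$ put $[\phi',\phi]_{X_\bullet}=\sum_{i}[\phi'(i,-),\phi(i,-)]_{X_i}\colon\phi_*(X_\bullet)\to\phi'_*(X_\bullet)$. Define $\Sigma_{\mathcal C}(X_\bullet,Y_\bullet)$ as the set of triples $(\psi,f,\phi)$, with $\phi\colon\mathbf m\times\omega\to\omega$ and $\psi\colon\mathbf n\times\omega\to\omega$ injections and $f\colon\phi_*(X_\bullet)\to\psi_*(Y_\bullet)$ a morphism in $\mathcal C$, modulo the equivalence relation $(\psi,f,\phi)\sim(\psi',f',\phi')$ iff $f'=[\psi',\psi]\circ f\circ[\phi,\phi']$; $[\psi,f,\phi]$ denotes the class. *)

theory Defs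
  imports Main
begin

text \<open>The countable set omega = {1,2,...} is modelled by the type nat
(via the relabelling n |-> n-1); injections omega -> omega are the injective
functions nat => nat.  The finite set m = {1,...,m} is modelled by {0..<m}.
An injection m x omega -> omega is a curried function phi :: nat => nat => nat
that is injective on {0..<m} x UNIV (values at i >= m are irrelevant).
A tuple X_1..X_m of objects is a list of length m.\<close>

record ('o, 'm) pcat =
  Ob    :: "'o set"
  Mor   :: "'m set"
  cdom  :: "'m \<Rightarrow> 'o"
  ccod  :: "'m \<Rightarrow> 'o"
  cid   :: "'o \<Rightarrow> 'm"
  ccomp :: "'m \<Rightarrow> 'm \<Rightarrow> 'm"   (* ccomp g f = g o f *)
  act   :: "(nat \<Rightarrow> nat) \<Rightarrow> 'o \<Rightarrow> 'o"
  actm  :: "(nat \<Rightarrow> nat) \<Rightarrow> 'm \<Rightarrow> 'm"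
  tr    :: "(nat \<Rightarrow> nat) \<Rightarrow> (nat \<Rightarrow> nat) \<Rightarrow> 'o \<Rightarrow> 'm" (* tr v u X = [v,u]_X : u_*X -> v_*X *)
  zero  :: "'o"
  plus  :: "'o \<Rightarrow> 'o \<Rightarrow> 'o"
  plusm :: "'m \<Rightarrow> 'm \<Rightarrow> 'm"

definition Hom :: "('o, 'm, 'z) pcat_scheme \<Rightarrow> 'o \<Rightarrow> 'o \<Rightarrow> 'm set" where
  "Hom C X Y = {f \<in> Mor C. cdom C f = X \<and> ccod C f = Y}"

definition is_category :: "('o, 'm, 'z) pcat_scheme \<Rightarrow> bool" where
  "is_category C \<longleftrightarrow>
     (\<forall>f \<in> Mor C. cdom C f \<in> Ob C \<and> ccod C f \<in> Ob C) \<and>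
     (\<forall>X \<in> Ob C. cid C X \<in> Hom C X X) \<and>
     (\<forall>f \<in> Mor C. \<forall>g \<in> Mor C. ccod C f = cdom C g \<longrightarrow>
         ccomp C g f \<in> Hom C (cdom C f) (ccod C g)) \<and>
     (\<forall>f \<in> Mor C. ccomp C (cid C (ccod C f)) f = f \<and> ccomp C f (cid C (cdom C f)) = f) \<and>
     (\<forall>f \<in> Mor C. \<forall>g \<in> Mor C. \<forall>h \<in> Mor C. ccod C f = cdom C g \<longrightarrow> ccod C g = cdom C h \<longrightarrow>
         ccomp C h (ccomp C g f) = ccomp C (ccomp C h g) f)"

text \<open>Strict action of the strict monoidal category EM (objects: injections,
unique morphism between any two objects, tensor = composition).  The action
functor EM x C -> C is (u -> v, f : X -> Y) |-> v_* f o [v,u]_X; the axioms below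
say that this is a functor which is strictly associative and unital.\<close>

definition is_EM_category :: "('o, 'm, 'z) pcat_scheme \<Rightarrow> bool" where
  "is_EM_category C \<longleftrightarrow> is_category C \<and>
     (\<forall>u. inj u \<longrightarrow>
        (\<forall>X \<in> Ob C. act C u X \<in> Ob C \<and> actm C u (cid C X) = cid C (act C u X)) \<and>
        (\<forall>f \<in> Mor C. actm C u f \<in> Hom C (act C u (cdom C f)) (act C u (ccod C f))) \<and>
        (\<forall>f \<in> Mor C. \<forall>g \<in> Mor C. ccod C f = cdom C g \<longrightarrow>
            actm C u (ccomp C g f) = ccomp C (actm C u g) (actm C u f))) \<and>
     (\<forall>X \<in> Ob C. act C id X = X) \<and> (\<forall>f \<in> Mor C. actm C id f = f) \<and>
     (\<forall>u v. inj u \<longrightarrow> inj v \<longrightarrow>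
        (\<forall>X \<in> Ob C. act C (u \<circ> v) X = act C u (act C v X)) \<and>
        (\<forall>f \<in> Mor C. actm C (u \<circ> v) f = actm C u (actm C v f))) \<and>
     (\<forall>u v. inj u \<longrightarrow> inj v \<longrightarrow>
        (\<forall>X \<in> Ob C. tr C v u X \<in> Hom C (act C u X) (act C v X)) \<and>
        (\<forall>f \<in> Mor C. ccomp C (tr C v u (ccod C f)) (actm C u f)
                     = ccomp C (actm C v f) (tr C v u (cdom C f)))) \<and>
     (\<forall>u. inj u \<longrightarrow> (\<forall>X \<in> Ob C. tr C u u X = cid C (act C u X))) \<and>
     (\<forall>u v w. inj u \<longrightarrow> inj v \<longrightarrow> inj w \<longrightarrow>
        (\<forall>X \<in> Ob C. ccomp C (tr C w v X) (tr C v u X) = tr C w u X)) \<and>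
     (\<forall>u u' w w'. inj u \<longrightarrow> inj u' \<longrightarrow> inj w \<longrightarrow> inj w' \<longrightarrow>
        (\<forall>X \<in> Ob C. ccomp C (actm C w' (tr C u' u X)) (tr C w' w (act C u X))
                     = tr C (w' \<circ> u') (w \<circ> u) X))"

definition supported_on :: "('o, 'm, 'z) pcat_scheme \<Rightarrow> 'o \<Rightarrow> nat set \<Rightarrow> bool" where
  "supported_on C X A \<longleftrightarrow> (\<forall>u. inj u \<longrightarrow> (\<forall>a \<in> A. u a = a) \<longrightarrow> act C u X = X)"

definition supp :: "('o, 'm, 'z) pcat_scheme \<Rightarrow> 'o \<Rightarrow> nat set" where
  "supp C X = \<Inter> {A. finite A \<and> supported_on C X A}"

definition tame :: "('o, 'm, 'z) pcat_scheme \<Rightarrow> bool" where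
  "tame C \<longleftrightarrow> (\<forall>X \<in> Ob C. \<exists>A. finite A \<and> supported_on C X A)"

definition disj :: "('o, 'm, 'z) pcat_scheme \<Rightarrow> 'o \<Rightarrow> 'o \<Rightarrow> bool" where
  "disj C X Y \<longleftrightarrow> X \<in> Ob C \<and> Y \<in> Ob C \<and> supp C X \<inter> supp C Y = {}"

definition parsummable :: "('o, 'm, 'z) pcat_scheme \<Rightarrow> bool" where
  "parsummable C \<longleftrightarrow> is_EM_category C \<and> tame C \<and>
     zero C \<in> Ob C \<and> supp C (zero C) = {} \<and>
     \<comment> \<open>+ is a functor on the full subcategory of disjointly supported pairs\<close>
     (\<forall>X Y. disj C X Y \<longrightarrow> plus C X Y \<in> Ob C) \<and>
     (\<forall>X Y X' Y' f g. disj C X Y \<longrightarrow> disj C X' Y' \<longrightarrow> f \<in> Hom C X X' \<longrightarrow> g \<in> Hom C Y Y' \<longrightarrow>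
        plusm C f g \<in> Hom C (plus C X Y) (plus C X' Y')) \<and>
     (\<forall>X Y. disj C X Y \<longrightarrow> plusm C (cid C X) (cid C Y) = cid C (plus C X Y)) \<and>
     (\<forall>X Y X' Y' X'' Y'' f g f' g'. disj C X Y \<longrightarrow> disj C X' Y' \<longrightarrow> disj C X'' Y'' \<longrightarrow>
        f \<in> Hom C X X' \<longrightarrow> g \<in> Hom C Y Y' \<longrightarrow> f' \<in> Hom C X' X'' \<longrightarrow> g' \<in> Hom C Y' Y'' \<longrightarrow>
        plusm C (ccomp C f' f) (ccomp C g' g) = ccomp C (plusm C f' g') (plusm C f g)) \<and>
     \<comment> \<open>strictly unital\<close>
     (\<forall>X \<in> Ob C. plus C (zero C) X = X \<and> plus C X (zero C) = X) \<and>
     (\<forall>f \<in> Mor C. plusm C (cid C (zero C)) f = f \<and> plusm C f (cid C (zero C)) = f) \<and>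
     \<comment> \<open>associative\<close>
     (\<forall>X Y Z. disj C X Y \<longrightarrow> disj C X Z \<longrightarrow> disj C Y Z \<longrightarrow>
        plus C (plus C X Y) Z = plus C X (plus C Y Z)) \<and>
     (\<forall>X Y Z X' Y' Z' f g h. disj C X Y \<longrightarrow> disj C X Z \<longrightarrow> disj C Y Z \<longrightarrow>
        disj C X' Y' \<longrightarrow> disj C X' Z' \<longrightarrow> disj C Y' Z' \<longrightarrow>
        f \<in> Hom C X X' \<longrightarrow> g \<in> Hom C Y Y' \<longrightarrow> h \<in> Hom C Z Z' \<longrightarrow>
        plusm C (plusm C f g) h = plusm C f (plusm C g h)) \<and>
     \<comment> \<open>commutative\<close>
     (\<forall>X Y. disj C X Y \<longrightarrow> plus C X Y = plus C Y X) \<and>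
     (\<forall>X Y X' Y' f g. disj C X Y \<longrightarrow> disj C X' Y' \<longrightarrow> f \<in> Hom C X X' \<longrightarrow> g \<in> Hom C Y Y' \<longrightarrow>
        plusm C f g = plusm C g f) \<and>
     \<comment> \<open>EM-equivariant\<close>
     (\<forall>u X Y. inj u \<longrightarrow> disj C X Y \<longrightarrow>
        act C u (plus C X Y) = plus C (act C u X) (act C u Y) \<and>
        tr C u id (plus C X Y) = plusm C (tr C u id X) (tr C u id Y)) \<and>
     (\<forall>u X Y X' Y' f g. inj u \<longrightarrow> disj C X Y \<longrightarrow> disj C X' Y' \<longrightarrow>
        f \<in> Hom C X X' \<longrightarrow> g \<in> Hom C Y Y' \<longrightarrow>
        actm C u (plusm C f g) = plusm C (actm C u f) (actm C u g))"

fun sumO :: "('o, 'm, 'z) pcat_scheme \<Rightarrow> 'o list \<Rightarrow> 'o" where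
  "sumO C [] = zero C"
| "sumO C (X # Xs) = plus C X (sumO C Xs)"

fun sumM :: "('o, 'm, 'z) pcat_scheme \<Rightarrow> 'm list \<Rightarrow> 'm" where
  "sumM C [] = cid C (zero C)"
| "sumM C (f # fs) = plusm C f (sumM C fs)"

definition inj_tuple :: "nat \<Rightarrow> (nat \<Rightarrow> nat \<Rightarrow> nat) \<Rightarrow> bool" where
  "inj_tuple m \<phi> \<longleftrightarrow> inj_on (\<lambda>(i, x). \<phi> i x) ({..<m} \<times> UNIV)"

definition pstar :: "('o, 'm, 'z) pcat_scheme \<Rightarrow> (nat \<Rightarrow> nat \<Rightarrow> nat) \<Rightarrow> 'o list \<Rightarrow> 'o" where
  "pstar C \<phi> Xs = sumO C (map (\<lambda>i. act C (\<phi> i) (Xs ! i)) [0..<length Xs])"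

definition pbr :: "('o, 'm, 'z) pcat_scheme \<Rightarrow> (nat \<Rightarrow> nat \<Rightarrow> nat) \<Rightarrow> (nat \<Rightarrow> nat \<Rightarrow> nat) \<Rightarrow> 'o list \<Rightarrow> 'm" where
  "pbr C \<phi>' \<phi> Xs = sumM C (map (\<lambda>i. tr C (\<phi>' i) (\<phi> i) (Xs ! i)) [0..<length Xs])"

definition Triples :: "('o, 'm, 'z) pcat_scheme \<Rightarrow> 'o list \<Rightarrow> 'o list
     \<Rightarrow> ((nat \<Rightarrow> nat \<Rightarrow> nat) \<times> 'm \<times> (nat \<Rightarrow> nat \<Rightarrow> nat)) set" where
  "Triples C Xs Ys = {(\<psi>, f, \<phi>). inj_tuple (length Xs) \<phi> \<and> inj_tuple (length Ys) \<psi> \<and>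
       f \<in> Hom C (pstar C \<phi> Xs) (pstar C \<psi> Ys)}"

definition SigRel :: "('o, 'm, 'z) pcat_scheme \<Rightarrow> 'o list \<Rightarrow> 'o list
     \<Rightarrow> (((nat \<Rightarrow> nat \<Rightarrow> nat) \<times> 'm \<times> (nat \<Rightarrow> nat \<Rightarrow> nat)) \<times>
         ((nat \<Rightarrow> nat \<Rightarrow> nat) \<times> 'm \<times> (nat \<Rightarrow> nat \<Rightarrow> nat))) set" where
  "SigRel C Xs Ys = {((\<psi>, f, \<phi>), (\<psi>', f', \<phi>')).
       (\<psi>, f, \<phi>) \<in> Triples C Xs Ys \<and> (\<psi>', f', \<phi>') \<in> Triples C Xs Ys \<and>
       f' = ccomp C (pbr C \<psi>' \<psi> Ys) (ccomp C f (pbr C \<phi> \<phi>' Xs))}"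

definition Sigma_C :: "('o, 'm, 'z) pcat_scheme \<Rightarrow> 'o list \<Rightarrow> 'o list
     \<Rightarrow> ((nat \<Rightarrow> nat \<Rightarrow> nat) \<times> 'm \<times> (nat \<Rightarrow> nat \<Rightarrow> nat)) set set" where
  "Sigma_C C Xs Ys = Triples C Xs Ys // SigRel C Xs Ys"

definition sclass :: "('o, 'm, 'z) pcat_scheme \<Rightarrow> 'o list \<Rightarrow> 'o list
     \<Rightarrow> (nat \<Rightarrow> nat \<Rightarrow> nat) \<Rightarrow> 'm \<Rightarrow> (nat \<Rightarrow> nat \<Rightarrow> nat)
     \<Rightarrow> ((nat \<Rightarrow> nat \<Rightarrow> nat) \<times> 'm \<times> (nat \<Rightarrow> nat \<Rightarrow> nat)) set" where
  "sclass C Xs Ys \<psi> f \<phi> = SigRel C Xs Ys `` {(\<psi>, f, \<phi>)}"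

end

theory Submission
  imports Defs "HOL-Library.Infinite_Set"
begin

(* Transporting along the canonical isomorphisms sends a triple (psi', f', phi') to
   [psi, psi'] o f' o [phi', phi] : phi_*(X) -> psi_*(Y), and the relation ~ is exactly the kernel
   of this map.  On triples with outer components (psi, phi) the map is the identity, so every
   class contains exactly one such triple.  This needs [phi, phi] = id and
   [phi'', phi'] o [phi', phi] = [phi'', phi], which hold summandwise once the sums phi_*(X) are
   defined, i.e. once the summands phi(i,-)_* X_i are disjointly supported.  That follows from
   u_* X being supported on u(A) whenever X is supported on A, which in turn rests on u_* X
   depending only on the restriction of u to a finite support of X. *)

locale category =
  fixes C :: "('o, 'm, 'z) pcat_scheme"
  assumes is_category: "is_category C"
begin

lemma comp_in_Hom: "f \<in> Hom C X Y \<Longrightarrow> g \<in> Hom C Y Z \<Longrightarrow> ccomp C g f \<in> Hom C X Z"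
  using is_category unfolding is_category_def Hom_def by (elim conjE) auto

lemma id_in_Hom: "X \<in> Ob C \<Longrightarrow> cid C X \<in> Hom C X X"
  using is_category unfolding is_category_def by (elim conjE) auto

lemma comp_id_left: "f \<in> Hom C X Y \<Longrightarrow> ccomp C (cid C Y) f = f"
  using is_category unfolding is_category_def Hom_def by (elim conjE) auto

lemma comp_id_right: "f \<in> Hom C X Y \<Longrightarrow> ccomp C f (cid C X) = f"
  using is_category unfolding is_category_def Hom_def by (elim conjE) auto

lemma comp_assoc:
  "f \<in> Hom C X Y \<Longrightarrow> g \<in> Hom C Y Z \<Longrightarrow> h \<in> Hom C Z W \<Longrightarrow>
    ccomp C h (ccomp C g f) = ccomp C (ccomp C h g) f"
  using is_category unfolding is_category_def Hom_def by (elim conjE) auto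

end

locale EM_category =
  fixes C :: "('o, 'm, 'z) pcat_scheme"
  assumes is_EM_category: "is_EM_category C"

sublocale EM_category \<subseteq> category
  using is_EM_category by unfold_locales (simp add: is_EM_category_def)

context EM_category
begin

lemma act_in_Ob: "inj u \<Longrightarrow> X \<in> Ob C \<Longrightarrow> act C u X \<in> Ob C"
  using is_EM_category unfolding is_EM_category_def by (elim conjE) blast

lemma act_comp: "inj u \<Longrightarrow> inj v \<Longrightarrow> X \<in> Ob C \<Longrightarrow> act C (u \<circ> v) X = act C u (act C v X)"
  using is_EM_category unfolding is_EM_category_def by (elim conjE) blast

lemma tr_in_Hom: "inj u \<Longrightarrow> inj v \<Longrightarrow> X \<in> Ob C \<Longrightarrow> tr C v u X \<in> Hom C (act C u X) (act C v X)"
  using is_EM_category unfolding is_EM_category_def by (elim conjE) blast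

lemma tr_refl: "inj u \<Longrightarrow> X \<in> Ob C \<Longrightarrow> tr C u u X = cid C (act C u X)"
  using is_EM_category unfolding is_EM_category_def by (elim conjE) blast

lemma tr_trans:
  "inj u \<Longrightarrow> inj v \<Longrightarrow> inj w \<Longrightarrow> X \<in> Ob C \<Longrightarrow> ccomp C (tr C w v X) (tr C v u X) = tr C w u X"
  using is_EM_category unfolding is_EM_category_def by simp

end

locale parsummable_category =
  fixes C :: "('o, 'm, 'z) pcat_scheme"
  assumes parsummable: "parsummable C"

sublocale parsummable_category \<subseteq> EM_category
  using parsummable by unfold_locales (simp add: parsummable_def)

context parsummable_category
begin

lemma finite_support_exists: "X \<in> Ob C \<Longrightarrow> \<exists>A. finite A \<and> supported_on C X A"
  using parsummable unfolding parsummable_def tame_def by (elim conjE) blast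

lemma zero_in_Ob: "zero C \<in> Ob C"
  using parsummable unfolding parsummable_def by (elim conjE) blast

lemma supp_zero: "supp C (zero C) = {}"
  using parsummable unfolding parsummable_def by (elim conjE) blast

lemma plus_in_Ob: "disj C X Y \<Longrightarrow> plus C X Y \<in> Ob C"
  using parsummable unfolding parsummable_def by (elim conjE) blast

lemma plusm_in_Hom:
  "disj C X Y \<Longrightarrow> disj C X' Y' \<Longrightarrow> f \<in> Hom C X X' \<Longrightarrow> g \<in> Hom C Y Y' \<Longrightarrow>
    plusm C f g \<in> Hom C (plus C X Y) (plus C X' Y')"
  using parsummable unfolding parsummable_def by (elim conjE) blast

lemma plusm_id: "disj C X Y \<Longrightarrow> plusm C (cid C X) (cid C Y) = cid C (plus C X Y)"
  using parsummable unfolding parsummable_def by (elim conjE) blast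

lemma plusm_comp:
  "disj C X Y \<Longrightarrow> disj C X' Y' \<Longrightarrow> disj C X'' Y'' \<Longrightarrow>
    f \<in> Hom C X X' \<Longrightarrow> g \<in> Hom C Y Y' \<Longrightarrow> f' \<in> Hom C X' X'' \<Longrightarrow> g' \<in> Hom C Y' Y'' \<Longrightarrow>
    plusm C (ccomp C f' f) (ccomp C g' g) = ccomp C (plusm C f' g') (plusm C f g)"
  using parsummable unfolding parsummable_def by simp

lemma act_plus: "inj u \<Longrightarrow> disj C X Y \<Longrightarrow> act C u (plus C X Y) = plus C (act C u X) (act C u Y)"
  using parsummable unfolding parsummable_def by simp

end

lemma inj_fixing_into:
  fixes A T :: "nat set"
  assumes "infinite T" and "T \<inter> A = {}"
  obtains s where "inj s" "\<forall>a\<in>A. s a = a" "s ` (- A) \<subseteq> T"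
proof -
  obtain f :: "nat \<Rightarrow> nat" where f: "inj f" "range f \<subseteq> T"
    using infinite_countable_subset[OF assms(1)] by blast
  let ?s = "\<lambda>x. if x \<in> A then x else f x"
  have "f x \<notin> A" for x
    using f(2) assms(2) by blast
  then have "inj ?s"
    using f(1) by (intro injI) (metis injD)
  then show thesis
    using f(2) by (intro that[of ?s]) auto
qed

lemma infinite_subsets_with_disjoint_images:
  assumes "inj u" and "infinite B"
  obtains S T where "S \<subseteq> B" "T \<subseteq> B" "infinite S" "infinite T" "w ` S \<inter> u ` T = {}"
proof -
  obtain B1 B2 where B: "B1 \<subseteq> B" "B2 \<subseteq> B" "infinite B1" "infinite B2" "B1 \<inter> B2 = {}"
    using infinite_split[OF assms(2)] by blast
  let ?S1 = "{b \<in> B. w b \<notin> u ` B1}" and ?S2 = "{b \<in> B. w b \<in> u ` B1}"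
  show thesis
  proof (cases "finite ?S1")
    case False
    then show thesis
      using that[of ?S1 B1] B by auto
  next
    case True
    have "B = ?S1 \<union> ?S2" by auto
    then have "infinite ?S2"
      using True assms(2) by (metis finite_UnI)
    moreover have "u ` B1 \<inter> u ` B2 = {}"
      using assms(1) B(5) by (auto dest: injD)
    ultimately show thesis
      using that[of ?S2 B2] B by blast
  qed
qed

lemma supp_subset: "finite A \<Longrightarrow> supported_on C X A \<Longrightarrow> supp C X \<subseteq> A"
  unfolding supp_def by blast

context EM_category
begin

lemma act_comp_fixing:
  assumes "X \<in> Ob C" "supported_on C X A" "inj u" "inj s" "\<forall>a\<in>A. s a = a"
  shows "act C (u \<circ> s) X = act C u X"
  using assms act_comp[of u s X] unfolding supported_on_def by simp

lemma act_eq_if_images_disjoint_off_support: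
  assumes X: "X \<in> Ob C" "finite A" "supported_on C X A"
    and p: "inj p" and q: "inj q" and agree: "\<forall>a\<in>A. p a = q a"
    and disjoint: "p ` (- A) \<inter> q ` (- A) = {}"
  shows "act C p X = act C q X"
proof -
  have "infinite (- A)"
    using X(2) by (simp add: Compl_eq_Diff_UNIV Diff_infinite_finite)
  then obtain E F where EF: "E \<subseteq> - A" "F \<subseteq> - A" "infinite E" "infinite F" "E \<inter> F = {}"
    by (rule infinite_split)
  obtain e where e: "inj e" "\<forall>a\<in>A. e a = a" "e ` (- A) \<subseteq> E"
    using inj_fixing_into[of E A] EF by blast
  obtain f where f: "inj f" "\<forall>a\<in>A. f a = a" "f ` (- A) \<subseteq> F"
    using inj_fixing_into[of F A] EF by blast
  \<comment> \<open>h glues p on A and E to q elsewhere; precomposing with e resp. f, which fix A,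
    turns h back into p resp. q.\<close>
  let ?D = "A \<union> E"
  define h where "h x = (if x \<in> ?D then p x else q x)" for x
  have "inj h"
  proof -
    have "inj_on h ?D"
      by (rule inj_on_cong[of ?D p h, THEN iffD1]) (auto simp: h_def intro: inj_on_subset[OF p])
    moreover have "inj_on h (- ?D)"
      by (rule inj_on_cong[of "- ?D" q h, THEN iffD1]) (auto simp: h_def intro: inj_on_subset[OF q])
    moreover have "h ` ?D \<inter> h ` (- ?D) = {}"
    proof -
      have "h ` ?D \<subseteq> q ` A \<union> p ` (- A)"
        using agree EF(1) unfolding h_def by auto
      moreover have "h ` (- ?D) \<subseteq> q ` (- A)"
        unfolding h_def by auto
      moreover have "q ` A \<inter> q ` (- A) = {}"
        using q by (auto dest: injD)
      ultimately show ?thesis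
        using disjoint by blast
    qed
    ultimately have "inj_on h (?D \<union> - ?D)"
      using inj_on_Un[of h ?D "- ?D"] by (simp add: Diff_eq)
    then show ?thesis
      by (simp only: Compl_partition)
  qed
  have he: "h \<circ> e = p \<circ> e"
  proof -
    have "e x \<in> ?D" for x
      using e by (cases "x \<in> A") auto
    then show ?thesis
      by (simp add: fun_eq_iff h_def)
  qed
  have hf: "h \<circ> f = q \<circ> f"
  proof -
    have "f x \<in> A \<or> f x \<notin> ?D" for x
      using f EF by (cases "x \<in> A") auto
    then show ?thesis
      using agree by (auto simp: fun_eq_iff h_def)
  qed
  have "act C p X = act C (p \<circ> e) X"
    using act_comp_fixing[OF X(1,3) p e(1,2)] by simp
  also have "\<dots> = act C h X"
    using act_comp_fixing[OF X(1,3) \<open>inj h\<close> e(1,2)] by (simp add: he)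
  also have "\<dots> = act C (q \<circ> f) X"
    using act_comp_fixing[OF X(1,3) \<open>inj h\<close> f(1,2)] by (simp add: hf)
  also have "\<dots> = act C q X"
    using act_comp_fixing[OF X(1,3) q f(1,2)] .
  finally show ?thesis .
qed

(* Precomposing u and w with injections that fix A and push the complement of A into T resp. S
   reduces to the case of disjoint images off A. *)
lemma act_eq_if_agree_on_support:
  assumes X: "X \<in> Ob C" "finite A" "supported_on C X A"
    and u: "inj u" and w: "inj w" and agree: "\<forall>a\<in>A. u a = w a"
  shows "act C u X = act C w X"
proof -
  have "infinite (- A)"
    using X(2) by (simp add: Compl_eq_Diff_UNIV Diff_infinite_finite)
  then obtain S T where ST: "S \<subseteq> - A" "T \<subseteq> - A" "infinite S" "infinite T" "w ` S \<inter> u ` T = {}"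
    by (rule infinite_subsets_with_disjoint_images[OF u _, where w = w])
  obtain \<sigma> where \<sigma>: "inj \<sigma>" "\<forall>a\<in>A. \<sigma> a = a" "\<sigma> ` (- A) \<subseteq> T"
    using inj_fixing_into[of T A] ST by blast
  obtain \<tau> where \<tau>: "inj \<tau>" "\<forall>a\<in>A. \<tau> a = a" "\<tau> ` (- A) \<subseteq> S"
    using inj_fixing_into[of S A] ST by blast
  have "act C u X = act C (u \<circ> \<sigma>) X"
    using act_comp_fixing[OF X(1,3) u \<sigma>(1,2)] by simp
  also have "\<dots> = act C (w \<circ> \<tau>) X"
  proof (rule act_eq_if_images_disjoint_off_support[OF X])
    have "(u \<circ> \<sigma>) ` (- A) \<subseteq> u ` T" "(w \<circ> \<tau>) ` (- A) \<subseteq> w ` S"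
      using \<sigma>(3) \<tau>(3) by (auto simp: image_comp[symmetric])
    then show "(u \<circ> \<sigma>) ` (- A) \<inter> (w \<circ> \<tau>) ` (- A) = {}"
      using ST(5) by blast
  qed (use u w agree \<sigma> \<tau> in \<open>auto intro: inj_compose\<close>)
  also have "\<dots> = act C w X"
    using act_comp_fixing[OF X(1,3) w \<tau>(1,2)] .
  finally show ?thesis .
qed

lemma supported_on_act:
  assumes "X \<in> Ob C" "finite A" "supported_on C X A" "inj u"
  shows "supported_on C (act C u X) (u ` A)"
  unfolding supported_on_def
proof (intro allI impI)
  fix v assume v: "inj v" and fixed: "\<forall>a\<in>u ` A. v a = a"
  have "act C v (act C u X) = act C (v \<circ> u) X"
    using act_comp[OF v assms(4,1)] by simp
  also have "\<dots> = act C u X"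
    using assms v fixed by (intro act_eq_if_agree_on_support) (auto intro: inj_compose)
  finally show "act C v (act C u X) = act C u X" .
qed

end

primrec disjointly_supported ::
    "('o, 'm, 'z) pcat_scheme \<Rightarrow> ('i \<Rightarrow> 'o) \<Rightarrow> ('i \<Rightarrow> nat set) \<Rightarrow> 'i list \<Rightarrow> bool" where
  "disjointly_supported C Z S [] = True"
| "disjointly_supported C Z S (i # is) \<longleftrightarrow>
     Z i \<in> Ob C \<and> finite (S i) \<and> supported_on C (Z i) (S i) \<and>
     S i \<inter> \<Union> (S ` set is) = {} \<and> disjointly_supported C Z S is"

lemma disjointly_supportedI:
  assumes "distinct is"
    and "\<And>i. i \<in> set is \<Longrightarrow> Z i \<in> Ob C \<and> finite (S i) \<and> supported_on C (Z i) (S i)"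
    and "\<And>i j. i \<in> set is \<Longrightarrow> j \<in> set is \<Longrightarrow> i \<noteq> j \<Longrightarrow> S i \<inter> S j = {}"
  shows "disjointly_supported C Z S is"
  using assms
proof (induction "is")
  case (Cons i "is")
  have "disjointly_supported C Z S is"
    using Cons.prems by (intro Cons.IH) auto
  moreover have "S i \<inter> \<Union> (S ` set is) = {}"
    using Cons.prems by fastforce
  ultimately show ?case
    using Cons.prems by simp
qed simp

context parsummable_category
begin

lemma supp_plus_subset:
  assumes XY: "disj C X Y" and A: "finite A" "supported_on C X A"
  shows "supp C (plus C X Y) \<subseteq> A \<union> supp C Y"
proof -
  have "supp C (plus C X Y) \<subseteq> A \<union> B" if B: "finite B" "supported_on C Y B" for B
  proof (rule supp_subset)
    show "supported_on C (plus C X Y) (A \<union> B)"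
      using A(2) B(2) act_plus[OF _ XY] unfolding supported_on_def by simp
  qed (use A B in simp)
  then show ?thesis
    unfolding supp_def[of C Y] by blast
qed

lemma disj_if_supports_disjoint:
  "X \<in> Ob C \<Longrightarrow> Y \<in> Ob C \<Longrightarrow> finite A \<Longrightarrow> supported_on C X A \<Longrightarrow> supp C Y \<inter> A = {} \<Longrightarrow> disj C X Y"
  unfolding disj_def using supp_subset[of A C X] by blast

(* Only supp can be bounded, not a support: zero C has empty supp but need not be supported on {}. *)
lemma sumO_in_Ob_and_supp:
  "disjointly_supported C Z S is \<Longrightarrow>
    sumO C (map Z is) \<in> Ob C \<and> supp C (sumO C (map Z is)) \<subseteq> \<Union> (S ` set is)"
proof (induction "is")
  case Nil
  show ?case using zero_in_Ob supp_zero by simp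
next
  case (Cons i "is")
  then have "disj C (Z i) (sumO C (map Z is))"
    by (intro disj_if_supports_disjoint) auto
  with Cons show ?case
    using plus_in_Ob supp_plus_subset by fastforce
qed

lemma disj_sumO_Cons:
  "disjointly_supported C Z S (i # is) \<Longrightarrow> disj C (Z i) (sumO C (map Z is))"
  using sumO_in_Ob_and_supp[of Z S "is"] by (intro disj_if_supports_disjoint) auto

lemma sumM_in_Hom:
  "disjointly_supported C Z S is \<Longrightarrow> disjointly_supported C W T is \<Longrightarrow>
    (\<And>i. i \<in> set is \<Longrightarrow> f i \<in> Hom C (Z i) (W i)) \<Longrightarrow>
    sumM C (map f is) \<in> Hom C (sumO C (map Z is)) (sumO C (map W is))"
proof (induction "is")
  case Nil
  show ?case using id_in_Hom[OF zero_in_Ob] by simp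
next
  case (Cons i "is")
  have "sumM C (map f is) \<in> Hom C (sumO C (map Z is)) (sumO C (map W is))"
    using Cons by simp
  moreover have "f i \<in> Hom C (Z i) (W i)"
    using Cons.prems(3) by simp
  ultimately show ?case
    using plusm_in_Hom[OF disj_sumO_Cons[OF Cons.prems(1)] disj_sumO_Cons[OF Cons.prems(2)]] by simp
qed

lemma sumM_id:
  "disjointly_supported C Z S is \<Longrightarrow> sumM C (map (\<lambda>i. cid C (Z i)) is) = cid C (sumO C (map Z is))"
proof (induction "is")
  case (Cons i "is")
  then show ?case
    using plusm_id[OF disj_sumO_Cons] by simp
qed simp

lemma sumM_comp:
  "disjointly_supported C Z S is \<Longrightarrow> disjointly_supported C W T is \<Longrightarrow> disjointly_supported C V U is \<Longrightarrow>
    (\<And>i. i \<in> set is \<Longrightarrow> f i \<in> Hom C (Z i) (W i)) \<Longrightarrow> (\<And>i. i \<in> set is \<Longrightarrow> g i \<in> Hom C (W i) (V i)) \<Longrightarrow>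
    sumM C (map (\<lambda>i. ccomp C (g i) (f i)) is) = ccomp C (sumM C (map g is)) (sumM C (map f is))"
proof (induction "is")
  case Nil
  show ?case using comp_id_left[OF id_in_Hom[OF zero_in_Ob]] by simp
next
  case (Cons i "is")
  have tails: "disjointly_supported C Z S is" "disjointly_supported C W T is" "disjointly_supported C V U is"
    using Cons.prems(1-3) by simp_all
  have "sumM C (map f is) \<in> Hom C (sumO C (map Z is)) (sumO C (map W is))"
    using sumM_in_Hom[OF tails(1,2)] Cons.prems(4) by simp
  moreover have "sumM C (map g is) \<in> Hom C (sumO C (map W is)) (sumO C (map V is))"
    using sumM_in_Hom[OF tails(2,3)] Cons.prems(5) by simp
  moreover have "sumM C (map (\<lambda>i. ccomp C (g i) (f i)) is) = ccomp C (sumM C (map g is)) (sumM C (map f is))"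
    using Cons.IH[OF tails] Cons.prems(4,5) by simp
  ultimately show ?case
    using plusm_comp[OF disj_sumO_Cons[OF Cons.prems(1)] disj_sumO_Cons[OF Cons.prems(2)]
        disj_sumO_Cons[OF Cons.prems(3)]] Cons.prems(4,5) by simp
qed

end

lemma inj_tuple_eqD:
  "inj_tuple m \<phi> \<Longrightarrow> i < m \<Longrightarrow> j < m \<Longrightarrow> \<phi> i x = \<phi> j y \<Longrightarrow> i = j \<and> x = y"
  unfolding inj_tuple_def using inj_onD[of "\<lambda>(i, x). \<phi> i x" _ "(i, x)" "(j, y)"] by simp

lemma inj_tuple_inj: "inj_tuple m \<phi> \<Longrightarrow> i < m \<Longrightarrow> inj (\<phi> i)"
  by (auto intro: injI dest: inj_tuple_eqD)

lemma inj_tuple_disjoint_images: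
  "inj_tuple m \<phi> \<Longrightarrow> i < m \<Longrightarrow> j < m \<Longrightarrow> i \<noteq> j \<Longrightarrow> \<phi> i ` A \<inter> \<phi> j ` B = {}"
  by (auto dest: inj_tuple_eqD)

context parsummable_category
begin

lemma pstar_summands_disjointly_supported:
  assumes L: "set L \<subseteq> Ob C" and \<phi>: "inj_tuple (length L) \<phi>"
  obtains S where "disjointly_supported C (\<lambda>i. act C (\<phi> i) (L ! i)) S [0..<length L]"
proof -
  have "\<forall>i. \<exists>A. i < length L \<longrightarrow> finite A \<and> supported_on C (L ! i) A"
    using finite_support_exists L nth_mem by blast
  then obtain A where A: "\<And>i. i < length L \<Longrightarrow> finite (A i) \<and> supported_on C (L ! i) (A i)"
    by metis
  have "disjointly_supported C (\<lambda>i. act C (\<phi> i) (L ! i)) (\<lambda>i. \<phi> i ` A i) [0..<length L]"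
  proof (rule disjointly_supportedI)
    fix i assume "i \<in> set [0..<length L]"
    then have Li: "L ! i \<in> Ob C" and u: "inj (\<phi> i)"
      and Ai: "finite (A i)" "supported_on C (L ! i) (A i)"
      using L A inj_tuple_inj[OF \<phi>] by auto
    then show "act C (\<phi> i) (L ! i) \<in> Ob C \<and> finite (\<phi> i ` A i) \<and>
        supported_on C (act C (\<phi> i) (L ! i)) (\<phi> i ` A i)"
      using act_in_Ob[OF u Li] supported_on_act[OF Li Ai u] by simp
  qed (use inj_tuple_disjoint_images[OF \<phi>] in auto)
  then show thesis by (rule that)
qed

lemma tr_nth_in_Hom:
  assumes "set L \<subseteq> Ob C" "inj_tuple (length L) \<phi>" "inj_tuple (length L) \<phi>'" "i < length L"
  shows "tr C (\<phi>' i) (\<phi> i) (L ! i) \<in> Hom C (act C (\<phi> i) (L ! i)) (act C (\<phi>' i) (L ! i))"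
  using assms by (intro tr_in_Hom inj_tuple_inj) auto

lemma pbr_in_Hom:
  assumes L: "set L \<subseteq> Ob C" and \<phi>: "inj_tuple (length L) \<phi>" and \<phi>': "inj_tuple (length L) \<phi>'"
  shows "pbr C \<phi>' \<phi> L \<in> Hom C (pstar C \<phi> L) (pstar C \<phi>' L)"
proof -
  obtain S where S: "disjointly_supported C (\<lambda>i. act C (\<phi> i) (L ! i)) S [0..<length L]"
    using pstar_summands_disjointly_supported[OF L \<phi>] .
  obtain S' where S': "disjointly_supported C (\<lambda>i. act C (\<phi>' i) (L ! i)) S' [0..<length L]"
    using pstar_summands_disjointly_supported[OF L \<phi>'] .
  show ?thesis
    unfolding pbr_def pstar_def using sumM_in_Hom[OF S S'] tr_nth_in_Hom[OF L \<phi> \<phi>'] by simp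
qed

lemma pbr_refl:
  assumes L: "set L \<subseteq> Ob C" and \<phi>: "inj_tuple (length L) \<phi>"
  shows "pbr C \<phi> \<phi> L = cid C (pstar C \<phi> L)"
proof -
  obtain S where S: "disjointly_supported C (\<lambda>i. act C (\<phi> i) (L ! i)) S [0..<length L]"
    using pstar_summands_disjointly_supported[OF L \<phi>] .
  have "tr C (\<phi> i) (\<phi> i) (L ! i) = cid C (act C (\<phi> i) (L ! i))" if "i < length L" for i
    using that L by (intro tr_refl inj_tuple_inj[OF \<phi>]) auto
  then have "map (\<lambda>i. tr C (\<phi> i) (\<phi> i) (L ! i)) [0..<length L]
      = map (\<lambda>i. cid C (act C (\<phi> i) (L ! i))) [0..<length L]"
    by simp
  then show ?thesis
    unfolding pbr_def pstar_def by (simp only: sumM_id[OF S])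
qed

lemma pbr_trans:
  assumes L: "set L \<subseteq> Ob C"
    and \<phi>: "inj_tuple (length L) \<phi>" and \<phi>': "inj_tuple (length L) \<phi>'" and \<phi>'': "inj_tuple (length L) \<phi>''"
  shows "ccomp C (pbr C \<phi>'' \<phi>' L) (pbr C \<phi>' \<phi> L) = pbr C \<phi>'' \<phi> L"
proof -
  obtain S where S: "disjointly_supported C (\<lambda>i. act C (\<phi> i) (L ! i)) S [0..<length L]"
    using pstar_summands_disjointly_supported[OF L \<phi>] .
  obtain S' where S': "disjointly_supported C (\<lambda>i. act C (\<phi>' i) (L ! i)) S' [0..<length L]"
    using pstar_summands_disjointly_supported[OF L \<phi>'] .
  obtain S'' where S'': "disjointly_supported C (\<lambda>i. act C (\<phi>'' i) (L ! i)) S'' [0..<length L]"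
    using pstar_summands_disjointly_supported[OF L \<phi>''] .
  have "tr C (\<phi>'' i) (\<phi> i) (L ! i) = ccomp C (tr C (\<phi>'' i) (\<phi>' i) (L ! i)) (tr C (\<phi>' i) (\<phi> i) (L ! i))"
    if "i < length L" for i
    using that L by (intro tr_trans[symmetric] inj_tuple_inj[OF \<phi>] inj_tuple_inj[OF \<phi>'] inj_tuple_inj[OF \<phi>'']) auto
  then have "map (\<lambda>i. tr C (\<phi>'' i) (\<phi> i) (L ! i)) [0..<length L]
      = map (\<lambda>i. ccomp C (tr C (\<phi>'' i) (\<phi>' i) (L ! i)) (tr C (\<phi>' i) (\<phi> i) (L ! i))) [0..<length L]"
    by simp
  then have "pbr C \<phi>'' \<phi> L
      = sumM C (map (\<lambda>i. ccomp C (tr C (\<phi>'' i) (\<phi>' i) (L ! i)) (tr C (\<phi>' i) (\<phi> i) (L ! i))) [0..<length L])"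
    unfolding pbr_def by (rule arg_cong)
  also have "\<dots> = ccomp C (pbr C \<phi>'' \<phi>' L) (pbr C \<phi>' \<phi> L)"
    unfolding pbr_def
    by (rule sumM_comp[OF S S' S'']) (simp_all add: tr_nth_in_Hom[OF L \<phi> \<phi>'] tr_nth_in_Hom[OF L \<phi>' \<phi>''])
  finally show ?thesis
    by (rule sym)
qed

end

definition rebase :: "('o, 'm, 'z) pcat_scheme \<Rightarrow> 'o list \<Rightarrow> 'o list \<Rightarrow>
    (nat \<Rightarrow> nat \<Rightarrow> nat) \<Rightarrow> (nat \<Rightarrow> nat \<Rightarrow> nat) \<Rightarrow>
    (nat \<Rightarrow> nat \<Rightarrow> nat) \<times> 'm \<times> (nat \<Rightarrow> nat \<Rightarrow> nat) \<Rightarrow> 'm" where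
  "rebase C Xs Ys \<psi> \<phi> t =
     (case t of (\<psi>', f, \<phi>') \<Rightarrow> ccomp C (pbr C \<psi> \<psi>' Ys) (ccomp C f (pbr C \<phi>' \<phi> Xs)))"

lemma SigRel_iff_rebase:
  "(t, (\<psi>', f', \<phi>')) \<in> SigRel C Xs Ys \<longleftrightarrow>
    t \<in> Triples C Xs Ys \<and> (\<psi>', f', \<phi>') \<in> Triples C Xs Ys \<and> f' = rebase C Xs Ys \<psi>' \<phi>' t"
  by (cases t) (simp add: SigRel_def rebase_def)

context parsummable_category
begin

context
  fixes Xs Ys :: "'o list"
  assumes Xs: "set Xs \<subseteq> Ob C" and Ys: "set Ys \<subseteq> Ob C"
begin

lemma rebase_in_Hom:
  assumes "t \<in> Triples C Xs Ys" "inj_tuple (length Xs) \<phi>" "inj_tuple (length Ys) \<psi>"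
  shows "rebase C Xs Ys \<psi> \<phi> t \<in> Hom C (pstar C \<phi> Xs) (pstar C \<psi> Ys)"
proof -
  obtain \<psi>' f \<phi>' where t: "t = (\<psi>', f, \<phi>')"
    by (cases t) blast
  have "inj_tuple (length Xs) \<phi>'" "inj_tuple (length Ys) \<psi>'"
    and "f \<in> Hom C (pstar C \<phi>' Xs) (pstar C \<psi>' Ys)"
    using assms(1) by (simp_all add: t Triples_def)
  then show ?thesis
    unfolding t rebase_def using assms(2,3)
    by (auto intro!: comp_in_Hom pbr_in_Hom[OF Xs] pbr_in_Hom[OF Ys])
qed

lemma rebase_self:
  assumes "f \<in> Hom C (pstar C \<phi> Xs) (pstar C \<psi> Ys)" "inj_tuple (length Xs) \<phi>" "inj_tuple (length Ys) \<psi>"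
  shows "rebase C Xs Ys \<psi> \<phi> (\<psi>, f, \<phi>) = f"
  using assms pbr_refl[OF Xs] pbr_refl[OF Ys] comp_id_left comp_id_right by (simp add: rebase_def)

lemma rebase_rebase:
  assumes t: "t \<in> Triples C Xs Ys"
    and \<phi>: "inj_tuple (length Xs) \<phi>" "inj_tuple (length Xs) \<phi>'"
    and \<psi>: "inj_tuple (length Ys) \<psi>" "inj_tuple (length Ys) \<psi>'"
  shows "rebase C Xs Ys \<psi> \<phi> (\<psi>', rebase C Xs Ys \<psi>' \<phi>' t, \<phi>') = rebase C Xs Ys \<psi> \<phi> t"
proof -
  obtain \<psi>0 f \<phi>0 where t_eq: "t = (\<psi>0, f, \<phi>0)"
    by (cases t) blast
  have \<phi>0: "inj_tuple (length Xs) \<phi>0" and \<psi>0: "inj_tuple (length Ys) \<psi>0"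
    and f: "f \<in> Hom C (pstar C \<phi>0 Xs) (pstar C \<psi>0 Ys)"
    using t by (simp_all add: t_eq Triples_def)
  define a where "a = pbr C \<psi> \<psi>' Ys"
  define a' where "a' = pbr C \<psi>' \<psi>0 Ys"
  define b where "b = pbr C \<phi>0 \<phi>' Xs"
  define b' where "b' = pbr C \<phi>' \<phi> Xs"
  have a: "a \<in> Hom C (pstar C \<psi>' Ys) (pstar C \<psi> Ys)" and a': "a' \<in> Hom C (pstar C \<psi>0 Ys) (pstar C \<psi>' Ys)"
    and b: "b \<in> Hom C (pstar C \<phi>' Xs) (pstar C \<phi>0 Xs)" and b': "b' \<in> Hom C (pstar C \<phi> Xs) (pstar C \<phi>' Xs)"
    unfolding a_def a'_def b_def b'_def using pbr_in_Hom Xs Ys \<phi> \<psi> \<phi>0 \<psi>0 by blast+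
  have "rebase C Xs Ys \<psi> \<phi> (\<psi>', rebase C Xs Ys \<psi>' \<phi>' t, \<phi>') = ccomp C a (ccomp C (ccomp C a' (ccomp C f b)) b')"
    by (simp add: rebase_def t_eq a_def a'_def b_def b'_def)
  also have "\<dots> = ccomp C a (ccomp C a' (ccomp C (ccomp C f b) b'))"
    using comp_assoc[OF b' comp_in_Hom[OF b f] a'] by simp
  also have "\<dots> = ccomp C a (ccomp C a' (ccomp C f (ccomp C b b')))"
    using comp_assoc[OF b' b f] by simp
  also have "\<dots> = ccomp C (ccomp C a a') (ccomp C f (ccomp C b b'))"
    using comp_assoc[OF comp_in_Hom[OF comp_in_Hom[OF b' b] f] a' a] by simp
  also have "\<dots> = rebase C Xs Ys \<psi> \<phi> t"
    unfolding a_def a'_def b_def b'_def rebase_def t_eq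
    using pbr_trans[OF Ys \<psi>0 \<psi>(2,1)] pbr_trans[OF Xs \<phi>(1,2) \<phi>0] by simp
  finally show ?thesis .
qed

lemma SigRel_iff_rebase_eq:
  assumes \<phi>: "inj_tuple (length Xs) \<phi>" and \<psi>: "inj_tuple (length Ys) \<psi>"
  shows "(t, t') \<in> SigRel C Xs Ys \<longleftrightarrow>
    t \<in> Triples C Xs Ys \<and> t' \<in> Triples C Xs Ys \<and> rebase C Xs Ys \<psi> \<phi> t = rebase C Xs Ys \<psi> \<phi> t'"
proof -
  obtain \<psi>' f' \<phi>' where t'_eq: "t' = (\<psi>', f', \<phi>')"
    by (cases t') blast
  have "f' = rebase C Xs Ys \<psi>' \<phi>' t \<longleftrightarrow> rebase C Xs Ys \<psi> \<phi> t = rebase C Xs Ys \<psi> \<phi> t'"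
    if t: "t \<in> Triples C Xs Ys" and t': "t' \<in> Triples C Xs Ys"
  proof -
    have \<phi>': "inj_tuple (length Xs) \<phi>'" and \<psi>': "inj_tuple (length Ys) \<psi>'"
      and f'_Hom: "f' \<in> Hom C (pstar C \<phi>' Xs) (pstar C \<psi>' Ys)"
      using t' by (simp_all add: t'_eq Triples_def)
    have f': "f' = rebase C Xs Ys \<psi>' \<phi>' (\<psi>, rebase C Xs Ys \<psi> \<phi> t', \<phi>)"
      using rebase_rebase[OF t' \<phi>' \<phi> \<psi>' \<psi>] rebase_self[OF f'_Hom \<phi>' \<psi>'] by (simp add: t'_eq)
    show ?thesis
    proof
      assume "f' = rebase C Xs Ys \<psi>' \<phi>' t"
      then show "rebase C Xs Ys \<psi> \<phi> t = rebase C Xs Ys \<psi> \<phi> t'"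
        using rebase_rebase[OF t \<phi> \<phi>' \<psi> \<psi>'] by (simp add: t'_eq)
    next
      assume "rebase C Xs Ys \<psi> \<phi> t = rebase C Xs Ys \<psi> \<phi> t'"
      then show "f' = rebase C Xs Ys \<psi>' \<phi>' t"
        using f' rebase_rebase[OF t \<phi>' \<phi> \<psi>' \<psi>] by simp
    qed
  qed
  then show ?thesis
    unfolding t'_eq SigRel_iff_rebase by blast
qed

lemma sclass_eq_rebase_fiber:
  assumes "f \<in> Hom C (pstar C \<phi> Xs) (pstar C \<psi> Ys)" "inj_tuple (length Xs) \<phi>" "inj_tuple (length Ys) \<psi>"
  shows "sclass C Xs Ys \<psi> f \<phi> = {t \<in> Triples C Xs Ys. rebase C Xs Ys \<psi> \<phi> t = f}"
  using assms SigRel_iff_rebase_eq rebase_self by (auto simp: sclass_def Triples_def)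

lemma rebase_image_Triples:
  assumes \<phi>: "inj_tuple (length Xs) \<phi>" and \<psi>: "inj_tuple (length Ys) \<psi>"
  shows "rebase C Xs Ys \<psi> \<phi> ` Triples C Xs Ys = Hom C (pstar C \<phi> Xs) (pstar C \<psi> Ys)"
proof
  show "rebase C Xs Ys \<psi> \<phi> ` Triples C Xs Ys \<subseteq> Hom C (pstar C \<phi> Xs) (pstar C \<psi> Ys)"
    using rebase_in_Hom[OF _ \<phi> \<psi>] by (rule image_subsetI)
  show "Hom C (pstar C \<phi> Xs) (pstar C \<psi> Ys) \<subseteq> rebase C Xs Ys \<psi> \<phi> ` Triples C Xs Ys"
  proof
    fix f assume f: "f \<in> Hom C (pstar C \<phi> Xs) (pstar C \<psi> Ys)"
    then have "(\<psi>, f, \<phi>) \<in> Triples C Xs Ys"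
      using \<phi> \<psi> by (simp add: Triples_def)
    then show "f \<in> rebase C Xs Ys \<psi> \<phi> ` Triples C Xs Ys"
      using rebase_self[OF f \<phi> \<psi>] by force
  qed
qed

lemma Sigma_C_eq_rebase_fibers:
  assumes \<phi>: "inj_tuple (length Xs) \<phi>" and \<psi>: "inj_tuple (length Ys) \<psi>"
  shows "Sigma_C C Xs Ys =
    (\<lambda>f. {t \<in> Triples C Xs Ys. rebase C Xs Ys \<psi> \<phi> t = f}) ` Hom C (pstar C \<phi> Xs) (pstar C \<psi> Ys)"
proof -
  let ?fiber = "\<lambda>f. {t \<in> Triples C Xs Ys. rebase C Xs Ys \<psi> \<phi> t = f}"
  have "SigRel C Xs Ys `` {t} = ?fiber (rebase C Xs Ys \<psi> \<phi> t)" if "t \<in> Triples C Xs Ys" for t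
    unfolding Image_singleton SigRel_iff_rebase_eq[OF \<phi> \<psi>] using that by auto
  then have "Sigma_C C Xs Ys = (\<lambda>t. ?fiber (rebase C Xs Ys \<psi> \<phi> t)) ` Triples C Xs Ys"
    unfolding Sigma_C_def quotient_def UNION_singleton_eq_range by (rule image_cong[OF refl])
  then show ?thesis
    unfolding rebase_image_Triples[OF \<phi> \<psi>, symmetric] image_image .
qed

lemma rebase_fibers_bij:
  assumes \<phi>: "inj_tuple (length Xs) \<phi>" and \<psi>: "inj_tuple (length Ys) \<psi>"
  shows "bij_betw (\<lambda>f. {t \<in> Triples C Xs Ys. rebase C Xs Ys \<psi> \<phi> t = f})
    (Hom C (pstar C \<phi> Xs) (pstar C \<psi> Ys)) (Sigma_C C Xs Ys)"
  unfolding bij_betw_def Sigma_C_eq_rebase_fibers[OF \<phi> \<psi>]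
proof (intro conjI inj_onI refl)
  fix f g assume f: "f \<in> Hom C (pstar C \<phi> Xs) (pstar C \<psi> Ys)"
    and fibers: "{t \<in> Triples C Xs Ys. rebase C Xs Ys \<psi> \<phi> t = f} = {t \<in> Triples C Xs Ys. rebase C Xs Ys \<psi> \<phi> t = g}"
  have "(\<psi>, f, \<phi>) \<in> {t \<in> Triples C Xs Ys. rebase C Xs Ys \<psi> \<phi> t = f}"
    using f \<phi> \<psi> rebase_self by (simp add: Triples_def)
  then show "f = g"
    unfolding fibers using rebase_self[OF f \<phi> \<psi>] by simp
qed

end

end

theorem lemma2p2:
  fixes C :: "('o, 'm, 'z) pcat_scheme"
    and Xs Ys :: "'o list"
    and \<phi> \<psi> :: "nat \<Rightarrow> nat \<Rightarrow> nat"
  assumes "parsummable C"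
    and "set Xs \<subseteq> Ob C" and "set Ys \<subseteq> Ob C"
    and "inj_tuple (length Xs) \<phi>" and "inj_tuple (length Ys) \<psi>"
  shows "bij_betw (\<lambda>f. sclass C Xs Ys \<psi> f \<phi>)
           (Hom C (pstar C \<phi> Xs) (pstar C \<psi> Ys)) (Sigma_C C Xs Ys)"
proof -
  interpret parsummable_category C
    using assms(1) by unfold_locales
  show ?thesis
    using rebase_fibers_bij[OF assms(2-5)] sclass_eq_rebase_fiber[OF assms(2,3) _ assms(4,5)]
    by (simp cong: bij_betw_cong)
qed

end
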